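(* Let $(S,\mathscr{S})$ be a measurable space, $n\le N$, and $X=(X_1,\ldots,X_n)$ an exchangeable random element of $S^n$. Then: (i) extending functionals exist, and every extending functional $\mathcal L$ satisfies $\mathcal L(1)=1$; (ii) if an extending functional $\mathcal L$ has $\|\mathcal L\|=1$, then $\mathcal L$ is monotone (i.e. $f\le g$ pointwise implies $\mathcal Lf\le\mathcal Lg$); (iii) if an extending functional $\mathcal L$ has $\|\mathcal L\|=1$ and $f\in b(S^N)$ satisfies $f(x)\le1$ for all $x\in S^N$, then $\mathcal L(\mathbf 1_{f\le t})\le\frac{1-\mathcal Lf}{1-t}$ for every $t<1$.
   Context: $b(S^k)$ is the space of bounded measurable real functions on $S^k$ with the sup norm. With $\mathfrak S[n,N]$ the set of injections $\{1,\ldots,n\}\to\{1,\ldots,N\}$ and $(N)_n=N(N-1)\cdots(N-n+1)$, $U^N_ng(x_1,\ldots,x_N)=\frac1{(N)_n}\sum_{\sigma\in\mathfrak S[n,N]}g(x_{\sigma(1)},\ldots,x_{\sigma(n)})$. The primitive extending functional $\mathcal E$ is the (well-defined) linear functional on $U^N_n(b(S^n))$ given by $\mathcal E(U^N_ng)=\mathbb{E}\,g(X_1,\ldots,X_n)$, with operator norm $\|\mathcal E\|$ w.r.t. the sup norm. An extending functional is a linear functional $\mathcal L:b(S^N)\to\mathbb{R}$ which is symmetric (i.e. $\mathcal L(f\circ\sigma)=\mathcal L(f)$ for every permutation $\sigma$ of coordinates), agrees with $\mathcal E$ on $U^N_n(b(S^n))$, and satisfies $\|\mathcal L\|=\|\mathcal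 E\|$. $\mathbf 1_{f\le t}$ is the indicator of $\{x:f(x)\le t\}$. *)

theory Defs
  imports "HOL-Probability.Probability" "HOL-Combinatorics.Permutations"
begin

text \<open>Points of S^k are extensional functions {..<k} \<rightarrow> S (coordinates indexed from 0).\<close>

abbreviation SPow :: "'a measure \<Rightarrow> nat \<Rightarrow> (nat \<Rightarrow> 'a) measure" where
  "SPow M k \<equiv> PiM {..<k} (\<lambda>_. M)"

definition bfun :: "'a measure \<Rightarrow> nat \<Rightarrow> ((nat \<Rightarrow> 'a) \<Rightarrow> real) set" where
  "bfun M k = {f. f \<in> borel_measurable (SPow M k) \<and>
                  (\<exists>B. \<forall>x\<in>space (SPow M k). \<bar>f x\<bar> \<le> B)}"

definition supnorm :: "'a measure \<Rightarrow> nat \<Rightarrow> ((nat \<Rightarrow> 'a) \<Rightarrow> real) \<Rightarrow> real" where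
  "supnorm M k f = (SUP x\<in>space (SPow M k). \<bar>f x\<bar>)"

text \<open>Injections {..<n} \<rightarrow> {..<N} (0-indexed version of S[n,N]).\<close>
definition injs :: "nat \<Rightarrow> nat \<Rightarrow> (nat \<Rightarrow> nat) set" where
  "injs n N = {\<sigma> \<in> {..<n} \<rightarrow>\<^sub>E {..<N}. inj_on \<sigma> {..<n}}"

definition falling :: "nat \<Rightarrow> nat \<Rightarrow> real" where
  "falling N n = (\<Prod>i<n. real (N - i))"

definition Uop :: "nat \<Rightarrow> nat \<Rightarrow> ((nat \<Rightarrow> 'a) \<Rightarrow> real) \<Rightarrow> (nat \<Rightarrow> 'a) \<Rightarrow> real" where
  "Uop n N g x = (1 / falling N n) * (\<Sum>\<sigma>\<in>injs n N. g (\<lambda>i\<in>{..<n}. x (\<sigma> i)))"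

definition exchangeable :: "'a measure \<Rightarrow> nat \<Rightarrow> 'b measure \<Rightarrow> ('b \<Rightarrow> nat \<Rightarrow> 'a) \<Rightarrow> bool" where
  "exchangeable M n P X \<longleftrightarrow>
     (\<forall>\<sigma>. \<sigma> permutes {..<n} \<longrightarrow>
        distr P (SPow M n) (\<lambda>\<omega>. X \<omega> \<circ> \<sigma>) = distr P (SPow M n) X)"

definition opnorm :: "'a measure \<Rightarrow> nat \<Rightarrow> (((nat \<Rightarrow> 'a) \<Rightarrow> real) \<Rightarrow> real) \<Rightarrow> ereal" where
  "opnorm M N L = (SUP f\<in>{f \<in> bfun M N. supnorm M N f \<le> 1}. ereal \<bar>L f\<bar>)"

text \<open>Operator norm of the primitive extending functional E, defined on U^N_n(b(S^n)) by
  E(U^N_n g) = E g(X): supremum of |E h| over h in the domain with sup norm at most 1.\<close>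
definition primnorm :: "'a measure \<Rightarrow> nat \<Rightarrow> nat \<Rightarrow> 'b measure \<Rightarrow> ('b \<Rightarrow> nat \<Rightarrow> 'a) \<Rightarrow> ereal" where
  "primnorm M n N P X =
     (SUP g\<in>{g \<in> bfun M n. supnorm M N (Uop n N g) \<le> 1}.
        ereal \<bar>integral\<^sup>L P (\<lambda>\<omega>. g (X \<omega>))\<bar>)"

definition extending ::
  "'a measure \<Rightarrow> nat \<Rightarrow> nat \<Rightarrow> 'b measure \<Rightarrow> ('b \<Rightarrow> nat \<Rightarrow> 'a) \<Rightarrow> (((nat \<Rightarrow> 'a) \<Rightarrow> real) \<Rightarrow> real) \<Rightarrow> bool" where
  "extending M n N P X L \<longleftrightarrow>
     (\<forall>f\<in>bfun M N. \<forall>g\<in>bfun M N. \<forall>a b::real.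
         L (\<lambda>x. a * f x + b * g x) = a * L f + b * L g) \<and>
     (\<forall>f\<in>bfun M N. \<forall>\<sigma>. \<sigma> permutes {..<N} \<longrightarrow> L (\<lambda>x. f (x \<circ> \<sigma>)) = L f) \<and>
     (\<forall>g\<in>bfun M n. L (Uop n N g) = integral\<^sup>L P (\<lambda>\<omega>. g (X \<omega>))) \<and>
     opnorm M N L = primnorm M n N P X"

end

theory Submission
  imports Defs
begin

text \<open>The primitive functional \<open>\<E>(U\<^sup>N\<^sub>n g) = \<bbbE> g(X)\<close> is well defined and bounded: by
  exchangeability \<open>\<bbbE> g(X) = \<bbbE> (U\<^sup>n\<^sub>n g)(X)\<close>, and a symmetric function \<open>h\<close> on \<open>S\<^sup>n\<close>
  is bounded by a constant multiple of \<open>\<parallel>U\<^sup>N\<^sub>n h\<parallel>\<close>, by induction on the number of coordinates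
  different from a fixed point \<open>z\<close>, evaluating \<open>U\<^sup>N\<^sub>n h\<close> at the point padded with copies
  of \<open>z\<close>. Hahn--Banach extends \<open>\<E>\<close> to \<open>b(S\<^sup>N)\<close> with the same norm, and averaging over
  permutations of the coordinates makes the extension symmetric. Since constants are
  U-statistics, \<open>\<L> 1 = 1\<close>; a functional with \<open>\<L> 1 = 1 = \<parallel>\<L>\<parallel>\<close> is positive, and the
  last claim is Markov's inequality for the pointwise bound \<open>\<one>\<^sub>f\<^sub>\<le>\<^sub>t \<le> (1 - f)/(1 - t)\<close>.\<close>

lemma space_SPow_not_empty: "space M \<noteq> {} \<Longrightarrow> space (SPow M k) \<noteq> {}"
  by (simp add: space_PiM PiE_eq_empty_iff)

lemma bfunE:
  assumes "f \<in> bfun M k"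
  obtains B where "f \<in> borel_measurable (SPow M k)" "\<And>x. x \<in> space (SPow M k) \<Longrightarrow> \<bar>f x\<bar> \<le> B"
  using assms unfolding bfun_def by blast

lemma bfunI:
  "f \<in> borel_measurable (SPow M k) \<Longrightarrow> (\<And>x. x \<in> space (SPow M k) \<Longrightarrow> \<bar>f x\<bar> \<le> B) \<Longrightarrow> f \<in> bfun M k"
  unfolding bfun_def by blast

lemma bfun_const [simp]: "(\<lambda>_. c) \<in> bfun M k"
  by (rule bfunI[where B="\<bar>c\<bar>"]) auto

lemma bfun_lincomb:
  assumes f: "f \<in> bfun M k" and g: "g \<in> bfun M k"
  shows "(\<lambda>x. a * f x + b * g x) \<in> bfun M k"
proof -
  obtain B1 B2 where
    fm: "f \<in> borel_measurable (SPow M k)" and B1: "\<And>x. x \<in> space (SPow M k) \<Longrightarrow> \<bar>f x\<bar> \<le> B1" and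
    gm: "g \<in> borel_measurable (SPow M k)" and B2: "\<And>x. x \<in> space (SPow M k) \<Longrightarrow> \<bar>g x\<bar> \<le> B2"
    using f g by (metis bfunE)
  show ?thesis
  proof (rule bfunI[where B="\<bar>a\<bar> * B1 + \<bar>b\<bar> * B2"])
    show "(\<lambda>x. a * f x + b * g x) \<in> borel_measurable (SPow M k)"
      using fm gm by measurable
    fix x assume x: "x \<in> space (SPow M k)"
    have "\<bar>a * f x + b * g x\<bar> \<le> \<bar>a\<bar> * \<bar>f x\<bar> + \<bar>b\<bar> * \<bar>g x\<bar>"
      by (metis abs_mult abs_triangle_ineq)
    also have "\<dots> \<le> \<bar>a\<bar> * B1 + \<bar>b\<bar> * B2"
      using B1[OF x] B2[OF x] by (intro add_mono mult_left_mono) auto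
    finally show "\<bar>a * f x + b * g x\<bar> \<le> \<bar>a\<bar> * B1 + \<bar>b\<bar> * B2" .
  qed
qed

lemma bfun_scale: "f \<in> bfun M k \<Longrightarrow> (\<lambda>x. a * f x) \<in> bfun M k"
  using bfun_lincomb[of f M k f a 0] by simp

lemma abs_le_supnorm: "f \<in> bfun M k \<Longrightarrow> x \<in> space (SPow M k) \<Longrightarrow> \<bar>f x\<bar> \<le> supnorm M k f"
  unfolding supnorm_def by (rule cSUP_upper) (auto simp: bdd_above_def elim!: bfunE)

lemma supnorm_least:
  "space M \<noteq> {} \<Longrightarrow> (\<And>x. x \<in> space (SPow M k) \<Longrightarrow> \<bar>f x\<bar> \<le> B) \<Longrightarrow> supnorm M k f \<le> B"
  unfolding supnorm_def by (rule cSUP_least) (auto simp: space_SPow_not_empty)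

lemma supnorm_nonneg: "space M \<noteq> {} \<Longrightarrow> f \<in> bfun M k \<Longrightarrow> 0 \<le> supnorm M k f"
  using space_SPow_not_empty abs_le_supnorm by (metis abs_ge_zero equals0I order_trans)

lemma supnorm_zero [simp]: "space M \<noteq> {} \<Longrightarrow> supnorm M k (\<lambda>_. 0) = 0"
  by (intro antisym supnorm_least supnorm_nonneg) auto

lemma supnorm_add_le:
  assumes "space M \<noteq> {}" "f \<in> bfun M k" "g \<in> bfun M k"
  shows "supnorm M k (\<lambda>x. f x + g x) \<le> supnorm M k f + supnorm M k g"
proof (rule supnorm_least)
  fix x assume "x \<in> space (SPow M k)"
  then show "\<bar>f x + g x\<bar> \<le> supnorm M k f + supnorm M k g"
    using assms abs_le_supnorm[of f M k x] abs_le_supnorm[of g M k x] by linarith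
qed (fact assms)

lemma supnorm_scale:
  assumes sM: "space M \<noteq> {}" and f: "f \<in> bfun M k" and a: "a \<ge> 0"
  shows "supnorm M k (\<lambda>x. a * f x) = a * supnorm M k f"
proof (cases "a = 0")
  case False
  with a have "a > 0" by simp
  have le: "supnorm M k (\<lambda>x. c * g x) \<le> c * supnorm M k g" if "g \<in> bfun M k" "c \<ge> 0" for g c
    using sM that abs_le_supnorm[OF that(1)] by (intro supnorm_least) (auto simp: abs_mult mult_left_mono)
  have "a * supnorm M k f = a * supnorm M k (\<lambda>x. (1/a) * (a * f x))"
    using \<open>a > 0\<close> by simp
  also have "\<dots> \<le> supnorm M k (\<lambda>x. a * f x)"
    using le[OF bfun_scale[OF f], of "1/a" a] \<open>a > 0\<close> by (simp add: field_simps)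
  finally show ?thesis
    using le[OF f a] by simp
qed (use sM in simp)

lemma abs_le_opnorm:
  assumes "opnorm M N L = ereal c" "f \<in> bfun M N" "supnorm M N f \<le> 1"
  shows "\<bar>L f\<bar> \<le> c"
proof -
  have "ereal \<bar>L f\<bar> \<le> opnorm M N L"
    unfolding opnorm_def by (rule SUP_upper) (use assms in auto)
  with assms show ?thesis by simp
qed

subsection \<open>Hahn--Banach for spaces of real functions\<close>

text \<open>Partial extensions in the Zorn argument are represented by their graphs.\<close>

definition dominated_extension_graph ::
  "('c \<Rightarrow> real) set \<Rightarrow> ('c \<Rightarrow> real) set \<Rightarrow> (('c \<Rightarrow> real) \<Rightarrow> real) \<Rightarrow> (('c \<Rightarrow> real) \<Rightarrow> real)
     \<Rightarrow> (('c \<Rightarrow> real) \<times> real) set \<Rightarrow> bool" where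
  "dominated_extension_graph W V \<phi> p G \<longleftrightarrow>
     Domain G \<subseteq> W \<and> single_valued G \<and> (\<forall>f\<in>V. (f, \<phi> f) \<in> G) \<and>
     (\<forall>f a g b c d. (f, a) \<in> G \<longrightarrow> (g, b) \<in> G \<longrightarrow> ((\<lambda>x. c * f x + d * g x), c * a + d * b) \<in> G) \<and>
     (\<forall>f a. (f, a) \<in> G \<longrightarrow> a \<le> p f)"

context
  fixes W V :: "('c \<Rightarrow> real) set" and \<phi> p :: "('c \<Rightarrow> real) \<Rightarrow> real"
begin

private abbreviation "good \<equiv> dominated_extension_graph W V \<phi> p"

private lemma goodD:
  assumes "good G"
  shows "(f, a) \<in> G \<Longrightarrow> f \<in> W" and "(f, a) \<in> G \<Longrightarrow> (f, b) \<in> G \<Longrightarrow> a = b"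
    and "f \<in> V \<Longrightarrow> (f, \<phi> f) \<in> G"
    and "(f, a) \<in> G \<Longrightarrow> (g, b) \<in> G \<Longrightarrow> ((\<lambda>x. c * f x + d * g x), c * a + d * b) \<in> G"
    and "(f, a) \<in> G \<Longrightarrow> a \<le> p f"
  using assms unfolding dominated_extension_graph_def single_valued_def by blast+

private lemma good_lincomb:
  "good G \<Longrightarrow> (f, a) \<in> G \<Longrightarrow> (g, b) \<in> G \<Longrightarrow> h = (\<lambda>x. c * f x + d * g x) \<Longrightarrow> v = c * a + d * b
    \<Longrightarrow> (h, v) \<in> G"
  using goodD(4) by blast

lemma dominated_extension_graph_Union:
  assumes chain: "subset.chain (Collect good) C" and "C \<noteq> {}"
  shows "good (\<Union>C)"
proof -
  have good: "\<And>G. G \<in> C \<Longrightarrow> good G" and cmp: "\<And>G H. G \<in> C \<Longrightarrow> H \<in> C \<Longrightarrow> G \<subseteq> H \<or> H \<subseteq> G"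
    using chain by (auto simp: subset_chain_def)
  obtain G1 where "G1 \<in> C" using \<open>C \<noteq> {}\<close> by blast
  have two: "\<exists>G\<in>C. (f, a) \<in> G \<and> (g, b) \<in> G" if "(f, a) \<in> \<Union>C" "(g, b) \<in> \<Union>C" for f a g b
    using that cmp by blast
  show ?thesis
    unfolding dominated_extension_graph_def single_valued_def
  proof (intro conjI allI impI ballI)
    show "Domain (\<Union>C) \<subseteq> W" using good goodD(1) by blast
    show "f \<in> V \<Longrightarrow> (f, \<phi> f) \<in> \<Union>C" for f using \<open>G1 \<in> C\<close> good goodD(3) by blast
    show "(f, a) \<in> \<Union>C \<Longrightarrow> a \<le> p f" for f a using good goodD(5) by blast
    show "(f, a) \<in> \<Union>C \<Longrightarrow> (f, b) \<in> \<Union>C \<Longrightarrow> a = b" for f a b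
      using two good goodD(2) by metis
    show "(f, a) \<in> \<Union>C \<Longrightarrow> (g, b) \<in> \<Union>C \<Longrightarrow> ((\<lambda>x. c * f x + d * g x), c * a + d * b) \<in> \<Union>C"
      for f a g b c d using two good goodD(4) by blast
  qed
qed

context
  assumes W_lincomb: "\<And>f g a b. f \<in> W \<Longrightarrow> g \<in> W \<Longrightarrow> (\<lambda>x. a * f x + b * g x) \<in> W"
    and p_add: "\<And>f g. f \<in> W \<Longrightarrow> g \<in> W \<Longrightarrow> p (\<lambda>x. f x + g x) \<le> p f + p g"
    and p_scale: "\<And>f a. f \<in> W \<Longrightarrow> a \<ge> 0 \<Longrightarrow> p (\<lambda>x. a * f x) = a * p f"
begin

text \<open>The one-dimensional step: the value \<open>c\<close> assigned to the new direction \<open>w\<close> must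
  separate \<open>b - p (g - w)\<close> from \<open>p (f + w) - a\<close>, which is possible by subadditivity of \<open>p\<close>.\<close>

private lemma separating_value:
  assumes G: "good G" and "(f0, a0) \<in> G" and w: "w \<in> W"
  obtains c where "\<And>g b. (g, b) \<in> G \<Longrightarrow> b - p (\<lambda>x. g x - w x) \<le> c"
    and "\<And>f a. (f, a) \<in> G \<Longrightarrow> c \<le> p (\<lambda>x. f x + w x) - a"
proof -
  define lower where "lower = {b - p (\<lambda>x. g x - w x) | g b. (g, b) \<in> G}"
  have sep: "b - p (\<lambda>x. g x - w x) \<le> p (\<lambda>x. f x + w x) - a" if "(g, b) \<in> G" "(f, a) \<in> G" for f a g b
  proof -
    have "a + b \<le> p (\<lambda>x. (f x + w x) + (g x - w x))"
      using goodD(5)[OF G good_lincomb[OF G that(2,1), of _ 1 1]] by simp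
    also have "\<dots> \<le> p (\<lambda>x. f x + w x) + p (\<lambda>x. g x - w x)"
      using W_lincomb[OF goodD(1)[OF G that(2)] w, of 1 1] W_lincomb[OF goodD(1)[OF G that(1)] w, of 1 "-1"]
      by (intro p_add) auto
    finally show ?thesis by simp
  qed
  have "lower \<noteq> {}" and "bdd_above lower"
    using sep \<open>(f0, a0) \<in> G\<close> unfolding lower_def bdd_above_def by blast+
  then show thesis
    using sep by (intro that[of "Sup lower"] cSup_upper cSup_least) (auto simp: lower_def)
qed

private lemma extended_value_dominated:
  assumes G: "good G" and fa: "(f, a) \<in> G" and w: "w \<in> W"
    and lower: "\<And>g b. (g, b) \<in> G \<Longrightarrow> b - p (\<lambda>x. g x - w x) \<le> c"
    and upper: "\<And>f a. (f, a) \<in> G \<Longrightarrow> c \<le> p (\<lambda>x. f x + w x) - a"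
  shows "a + t * c \<le> p (\<lambda>x. f x + t * w x)"
proof (cases t "0 :: real" rule: linorder_cases)
  case equal
  then show ?thesis using goodD(5)[OF G fa] by simp
next
  case greater
  let ?u = "\<lambda>x. (1 / t) * f x + 1 * w x"
  have "((\<lambda>x. (1 / t) * f x), a / t) \<in> G"
    by (rule good_lincomb[OF G fa fa, where d=0 and c="1 / t"]) auto
  from upper[OF this] have "c \<le> p ?u - a / t" by simp
  moreover have "p (\<lambda>x. f x + t * w x) = p (\<lambda>x. t * ?u x)"
    using greater by (simp add: distrib_left)
  moreover have "\<dots> = t * p ?u"
    using greater by (intro p_scale W_lincomb goodD(1)[OF G fa] w) simp
  ultimately show ?thesis using greater by (simp add: field_simps)
next
  case less
  let ?u = "\<lambda>x. (- 1 / t) * f x + (- 1) * w x"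
  have "((\<lambda>x. (- 1 / t) * f x), - a / t) \<in> G"
    by (rule good_lincomb[OF G fa fa, where d=0 and c="- 1 / t"]) auto
  from lower[OF this] have "- a / t - p ?u \<le> c" by simp
  moreover have "p (\<lambda>x. f x + t * w x) = p (\<lambda>x. (- t) * ?u x)"
    using less by (intro arg_cong[where f=p] ext) (simp add: field_simps)
  moreover have "\<dots> = (- t) * p ?u"
    using less by (intro p_scale W_lincomb goodD(1)[OF G fa] w) simp
  ultimately show ?thesis using less by (simp add: field_simps)
qed

private lemma extended_value_unique:
  assumes G: "good G" and w: "w \<notin> Domain G"
    and "(f1, a1) \<in> G" "(f2, a2) \<in> G" and eq: "(\<lambda>x. f1 x + t1 * w x) = (\<lambda>x. f2 x + t2 * w x)"
  shows "a1 + t1 * c = a2 + t2 * c"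
proof (cases "t1 = t2")
  case True
  have "f1 = f2"
  proof
    fix x show "f1 x = f2 x" using fun_cong[OF eq, of x] True by simp
  qed
  then show ?thesis using True goodD(2)[OF G \<open>(f1, a1) \<in> G\<close>] \<open>(f2, a2) \<in> G\<close> by simp
next
  case False
  \<comment> \<open>otherwise \<open>w\<close> would be a combination of \<open>f1\<close> and \<open>f2\<close>, hence already in the domain of \<open>G\<close>\<close>
  have w_comb: "w = (\<lambda>x. (1 / (t2 - t1)) * f1 x + (- 1 / (t2 - t1)) * f2 x)"
  proof
    fix x
    have "(t2 - t1) * w x = f1 x - f2 x" using fun_cong[OF eq, of x] by (simp add: algebra_simps)
    then have "w x = (f1 x - f2 x) / (t2 - t1)" using False by (simp add: eq_divide_eq mult.commute)
    then show "w x = (1 / (t2 - t1)) * f1 x + (- 1 / (t2 - t1)) * f2 x"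
      by (simp add: diff_divide_distrib)
  qed
  have "(w, (1 / (t2 - t1)) * a1 + (- 1 / (t2 - t1)) * a2) \<in> G"
    by (rule good_lincomb[OF G \<open>(f1, a1) \<in> G\<close> \<open>(f2, a2) \<in> G\<close> w_comb]) simp
  with w show ?thesis by blast
qed

private lemma extend_graph:
  assumes G: "good G" and "(f0, a0) \<in> G" and w: "w \<in> W" "w \<notin> Domain G"
  obtains G' where "good G'" "G \<subseteq> G'" "w \<in> Domain G'"
proof -
  obtain c where lower: "\<And>g b. (g, b) \<in> G \<Longrightarrow> b - p (\<lambda>x. g x - w x) \<le> c"
    and upper: "\<And>f a. (f, a) \<in> G \<Longrightarrow> c \<le> p (\<lambda>x. f x + w x) - a"
    by (rule separating_value[OF G \<open>(f0, a0) \<in> G\<close> w(1)]) blast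
  define G' where "G' = {((\<lambda>x. f x + t * w x), a + t * c) | f a t. (f, a) \<in> G}"
  have G'I: "(h, v) \<in> G'" if "(f, a) \<in> G" "h = (\<lambda>x. f x + t * w x)" "v = a + t * c" for f a t h v
    unfolding G'_def using that by blast
  have G'E: "\<exists>f a t. (f, a) \<in> G \<and> h = (\<lambda>x. f x + t * w x) \<and> v = a + t * c" if "(h, v) \<in> G'" for h v
    using that unfolding G'_def by blast
  have zero: "((\<lambda>x. 0), 0) \<in> G"
    by (rule good_lincomb[OF G \<open>(f0, a0) \<in> G\<close> \<open>(f0, a0) \<in> G\<close>, where c=0 and d=0]) auto
  have "good G'"
    unfolding dominated_extension_graph_def single_valued_def
  proof (intro conjI allI impI ballI subsetI)
    fix h assume "h \<in> Domain G'"
    then obtain f a t where "(f, a) \<in> G" "h = (\<lambda>x. f x + t * w x)" using G'E by blast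
    then show "h \<in> W" using W_lincomb[OF goodD(1)[OF G] w(1), of f a 1 t] by simp
  next
    fix h a b assume "(h, a) \<in> G'" "(h, b) \<in> G'"
    obtain f1 a1 t1 where "(f1, a1) \<in> G" "h = (\<lambda>x. f1 x + t1 * w x)" "a = a1 + t1 * c"
      using G'E[OF \<open>(h, a) \<in> G'\<close>] by blast
    moreover obtain f2 a2 t2 where "(f2, a2) \<in> G" "h = (\<lambda>x. f2 x + t2 * w x)" "b = a2 + t2 * c"
      using G'E[OF \<open>(h, b) \<in> G'\<close>] by blast
    ultimately show "a = b" using extended_value_unique[OF G w(2), of f1 a1 f2 a2 t1 t2] by simp
  next
    fix f assume "f \<in> V"
    show "(f, \<phi> f) \<in> G'" by (rule G'I[OF goodD(3)[OF G \<open>f \<in> V\<close>], where t=0]) auto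
  next
    fix h a assume "(h, a) \<in> G'"
    then obtain f a' t where "(f, a') \<in> G" "h = (\<lambda>x. f x + t * w x)" "a = a' + t * c"
      using G'E by blast
    then show "a \<le> p h" using extended_value_dominated[OF G _ w(1) lower upper, of f a' t] by simp
  next
    fix h a g b d e assume "(h, a) \<in> G'" "(g, b) \<in> G'"
    obtain f1 a1 t1 where "(f1, a1) \<in> G" "h = (\<lambda>x. f1 x + t1 * w x)" "a = a1 + t1 * c"
      using G'E[OF \<open>(h, a) \<in> G'\<close>] by blast
    moreover obtain f2 a2 t2 where "(f2, a2) \<in> G" "g = (\<lambda>x. f2 x + t2 * w x)" "b = a2 + t2 * c"
      using G'E[OF \<open>(g, b) \<in> G'\<close>] by blast
    ultimately show "((\<lambda>x. d * h x + e * g x), d * a + e * b) \<in> G'"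
      by (intro G'I[OF good_lincomb[OF G, of f1 a1 f2 a2 _ d e], where t="d * t1 + e * t2"])
        (auto simp: algebra_simps)
  qed
  moreover have "G \<subseteq> G'"
  proof
    fix z assume "z \<in> G"
    then show "z \<in> G'" by (cases z) (auto intro: G'I[where t=0])
  qed
  moreover have "(w, c) \<in> G'" by (rule G'I[OF zero, where t=1]) auto
  ultimately show thesis using that by blast
qed

theorem hahn_banach_extension:
  assumes V_sub: "V \<subseteq> W" and "f0 \<in> V"
    and V_lincomb: "\<And>f g a b. f \<in> V \<Longrightarrow> g \<in> V \<Longrightarrow> (\<lambda>x. a * f x + b * g x) \<in> V"
    and \<phi>_lincomb: "\<And>f g a b. f \<in> V \<Longrightarrow> g \<in> V \<Longrightarrow> \<phi> (\<lambda>x. a * f x + b * g x) = a * \<phi> f + b * \<phi> g"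
    and \<phi>_le: "\<And>f. f \<in> V \<Longrightarrow> \<phi> f \<le> p f"
  obtains L where "\<And>f g a b. f \<in> W \<Longrightarrow> g \<in> W \<Longrightarrow> L (\<lambda>x. a * f x + b * g x) = a * L f + b * L g"
    and "\<And>f. f \<in> V \<Longrightarrow> L f = \<phi> f" and "\<And>f. f \<in> W \<Longrightarrow> L f \<le> p f"
proof -
  define G0 where "G0 = (\<lambda>f. (f, \<phi> f)) ` V"
  have "good G0"
    unfolding dominated_extension_graph_def single_valued_def
  proof (intro conjI allI impI ballI)
    show "Domain G0 \<subseteq> W" using V_sub by (auto simp: G0_def)
    show "(f, a) \<in> G0 \<Longrightarrow> (f, b) \<in> G0 \<Longrightarrow> a = b" for f a b by (auto simp: G0_def)
    show "f \<in> V \<Longrightarrow> (f, \<phi> f) \<in> G0" for f by (simp add: G0_def)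
    show "(f, a) \<in> G0 \<Longrightarrow> a \<le> p f" for f a using \<phi>_le by (auto simp: G0_def)
    show "(f, a) \<in> G0 \<Longrightarrow> (g, b) \<in> G0 \<Longrightarrow> ((\<lambda>x. c * f x + d * g x), c * a + d * b) \<in> G0"
      for f a g b c d using V_lincomb \<phi>_lincomb by (auto simp: G0_def image_iff)
  qed
  have "\<exists>G\<in>Collect good. \<forall>H\<in>Collect good. G \<subseteq> H \<longrightarrow> H = G"
  proof (rule subset_Zorn)
    fix C assume "subset.chain (Collect good) C"
    then show "\<exists>U\<in>Collect good. \<forall>G\<in>C. G \<subseteq> U"
      using \<open>good G0\<close> dominated_extension_graph_Union
      by (cases "C = {}") (auto intro!: bexI[of _ "\<Union>C"])
  qed
  then obtain G where G: "good G" and maximal: "\<And>H. good H \<Longrightarrow> G \<subseteq> H \<Longrightarrow> H = G"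
    by blast
  have total: "w \<in> Domain G" if "w \<in> W" for w
    using extend_graph[OF G goodD(3)[OF G \<open>f0 \<in> V\<close>] that] maximal by metis
  define L where "L w = (THE a. (w, a) \<in> G)" for w
  have L_eq: "L w = a" if "(w, a) \<in> G" for w a
    unfolding L_def using that goodD(2)[OF G] by blast
  have L_in: "(w, L w) \<in> G" if "w \<in> W" for w
    using total[OF that] L_eq by blast
  show thesis
  proof (rule that)
    show "L (\<lambda>x. a * f x + b * g x) = a * L f + b * L g" if "f \<in> W" "g \<in> W" for f g a b
      by (intro L_eq goodD(4)[OF G] L_in that)
    show "L f = \<phi> f" if "f \<in> V" for f by (intro L_eq goodD(3)[OF G that])
    show "L f \<le> p f" if "f \<in> W" for f by (intro goodD(5)[OF G] L_in that)
  qed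
qed

end

end

subsection \<open>Injections and U-statistics\<close>

lemma injs_less: "\<tau> \<in> injs n N \<Longrightarrow> i < n \<Longrightarrow> \<tau> i < N"
  unfolding injs_def by auto

lemma injs_inj_on: "\<tau> \<in> injs n N \<Longrightarrow> inj_on \<tau> {..<n}"
  unfolding injs_def by auto

lemma injsI:
  "(\<And>i. i < n \<Longrightarrow> \<tau> i < N) \<Longrightarrow> (\<And>i. i \<ge> n \<Longrightarrow> \<tau> i = undefined) \<Longrightarrow> inj_on \<tau> {..<n}
    \<Longrightarrow> \<tau> \<in> injs n N"
  unfolding injs_def by (auto simp: PiE_def extensional_def)

lemma injs_eqI:
  assumes "\<tau>1 \<in> injs n N" "\<tau>2 \<in> injs n N" "\<And>i. i < n \<Longrightarrow> \<tau>1 i = \<tau>2 i"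
  shows "\<tau>1 = \<tau>2"
  using assms unfolding injs_def by (intro PiE_ext[of _ "{..<n}" "\<lambda>_. {..<N}"]) auto

lemma injs_image_self: "\<pi> \<in> injs n n \<Longrightarrow> \<pi> ` {..<n} = {..<n}"
  by (rule endo_inj_surj) (auto simp: injs_less injs_inj_on)

lemma finite_injs: "finite (injs n N)"
  unfolding injs_def by (rule finite_subset[of _ "{..<n} \<rightarrow>\<^sub>E {..<N}"]) (auto intro: finite_PiE)

lemma falling_eq_card_injs: "falling N n = real (card (injs n N))"
proof -
  have "card (injs n N) = (\<Prod>i<n. N - i)"
    using card_inj_on_subset_funcset[of "{..<n}" "{..<N}" "{..<n}"]
    by (simp add: injs_def atLeast0LessThan)
  then show ?thesis by (simp add: falling_def)
qed

lemma falling_pos: "n \<le> N \<Longrightarrow> falling N n > 0"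
  unfolding falling_def by (intro prod_pos) auto

lemma sum_injs_reindex:
  assumes "\<And>\<tau>. \<tau> \<in> injs n N \<Longrightarrow> f \<tau> \<in> injs n N" "inj_on f (injs n N)"
  shows "(\<Sum>\<tau>\<in>injs n N. G (f \<tau>)) = (\<Sum>\<tau>\<in>injs n N. G \<tau>)"
proof -
  have "f ` injs n N = injs n N" by (rule endo_inj_surj) (use assms finite_injs in auto)
  then show ?thesis using sum.reindex[OF assms(2), of G] by simp
qed

lemma Uop_const: "n \<le> N \<Longrightarrow> Uop n N (\<lambda>_. c) = (\<lambda>_. c)"
  using falling_pos[of n N] by (auto simp: Uop_def falling_eq_card_injs)

lemma Uop_lincomb: "Uop n N (\<lambda>y. a * g1 y + b * g2 y) = (\<lambda>x. a * Uop n N g1 x + b * Uop n N g2 x)"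
  by (rule ext) (simp add: Uop_def sum.distrib sum_distrib_left algebra_simps)

text \<open>\<open>U\<^sup>N\<^sub>n g\<close> is symmetric: composing with a permutation of the \<open>N\<close> coordinates
  only permutes the injections it averages over.\<close>

lemma Uop_compose_permutes:
  assumes \<rho>: "\<rho> permutes {..<N}"
  shows "Uop n N g (x \<circ> \<rho>) = Uop n N g x"
proof -
  let ?f = "\<lambda>\<tau>. restrict (\<rho> \<circ> \<tau>) {..<n}"
  have "?f \<tau> \<in> injs n N" if "\<tau> \<in> injs n N" for \<tau>
    using injs_less[OF that] permutes_in_image[OF \<rho>] injs_inj_on[OF that] permutes_inj[OF \<rho>]
    by (intro injsI) (auto simp: inj_on_def inj_def)
  moreover have "inj_on ?f (injs n N)"
  proof (rule inj_onI)
    fix \<tau>1 \<tau>2 assume \<tau>: "\<tau>1 \<in> injs n N" "\<tau>2 \<in> injs n N" "?f \<tau>1 = ?f \<tau>2"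
    show "\<tau>1 = \<tau>2"
    proof (rule injs_eqI[OF \<tau>(1,2)])
      fix i assume "i < n"
      then have "\<rho> (\<tau>1 i) = \<rho> (\<tau>2 i)" using fun_cong[OF \<tau>(3), of i] by simp
      then show "\<tau>1 i = \<tau>2 i" using permutes_inj[OF \<rho>] by (simp add: inj_eq)
    qed
  qed
  ultimately have "(\<Sum>\<tau>\<in>injs n N. g (\<lambda>i\<in>{..<n}. x (?f \<tau> i))) = (\<Sum>\<tau>\<in>injs n N. g (\<lambda>i\<in>{..<n}. x (\<tau> i)))"
    by (rule sum_injs_reindex)
  moreover have "(\<Sum>\<tau>\<in>injs n N. g (\<lambda>i\<in>{..<n}. (x \<circ> \<rho>) (\<tau> i))) = (\<Sum>\<tau>\<in>injs n N. g (\<lambda>i\<in>{..<n}. x (?f \<tau> i)))"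
    by (intro sum.cong refl arg_cong[where f=g] restrict_ext) auto
  ultimately show ?thesis unfolding Uop_def by simp
qed

lemma Uop_Uop_self: "Uop n N (Uop n n g) = Uop n N g"
proof
  fix x
  have precompose: "(\<Sum>\<tau>\<in>injs n N. g (\<lambda>i\<in>{..<n}. x (\<tau> (\<pi> i)))) = (\<Sum>\<tau>\<in>injs n N. g (\<lambda>i\<in>{..<n}. x (\<tau> i)))"
    if \<pi>: "\<pi> \<in> injs n n" for \<pi>
  proof -
    let ?f = "\<lambda>\<tau>. restrict (\<tau> \<circ> \<pi>) {..<n}"
    have "?f \<tau> \<in> injs n N" if "\<tau> \<in> injs n N" for \<tau>
      using injs_less[OF that] injs_less[OF \<pi>] injs_inj_on[OF that] injs_inj_on[OF \<pi>]
      by (intro injsI) (auto simp: inj_on_def)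
    moreover have "inj_on ?f (injs n N)"
    proof (rule inj_onI)
      fix \<tau>1 \<tau>2 assume \<tau>: "\<tau>1 \<in> injs n N" "\<tau>2 \<in> injs n N" "?f \<tau>1 = ?f \<tau>2"
      show "\<tau>1 = \<tau>2"
      proof (rule injs_eqI[OF \<tau>(1,2)])
        fix i assume "i < n"
        then obtain j where "j < n" "\<pi> j = i" using injs_image_self[OF \<pi>] by (metis imageE lessThan_iff)
        then show "\<tau>1 i = \<tau>2 i" using fun_cong[OF \<tau>(3), of j] by simp
      qed
    qed
    ultimately have "(\<Sum>\<tau>\<in>injs n N. g (\<lambda>i\<in>{..<n}. x (?f \<tau> i))) = (\<Sum>\<tau>\<in>injs n N. g (\<lambda>i\<in>{..<n}. x (\<tau> i)))"
      by (rule sum_injs_reindex)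
    then show ?thesis by (simp cong: restrict_cong)
  qed
  have "Uop n N (Uop n n g) x = (1 / falling N n) * (\<Sum>\<tau>\<in>injs n N. (1 / falling n n) *
          (\<Sum>\<pi>\<in>injs n n. g (\<lambda>i\<in>{..<n}. x (\<tau> (\<pi> i)))))"
    unfolding Uop_def
    by (intro arg_cong[where f="(*) _"] sum.cong refl arg_cong[where f=g] restrict_ext) (auto simp: injs_less)
  also have "\<dots> = (1 / falling N n) * ((1 / falling n n) *
          (\<Sum>\<pi>\<in>injs n n. \<Sum>\<tau>\<in>injs n N. g (\<lambda>i\<in>{..<n}. x (\<tau> (\<pi> i)))))"
    by (simp add: sum_distrib_left[symmetric] sum.swap[of _ "injs n N"] sum_divide_distrib[symmetric])
  also have "\<dots> = (1 / falling N n) * ((1 / falling n n) *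
          (\<Sum>\<pi>\<in>injs n n. \<Sum>\<tau>\<in>injs n N. g (\<lambda>i\<in>{..<n}. x (\<tau> i))))"
    using precompose by simp
  also have "\<dots> = Uop n N g x"
    using falling_pos[of n n] by (simp add: Uop_def falling_eq_card_injs)
  finally show "Uop n N (Uop n n g) x = Uop n N g x" .
qed

lemma restrict_compose_in_space:
  assumes "\<tau> \<in> injs n N" "x \<in> space (SPow M N)"
  shows "(\<lambda>i\<in>{..<n}. x (\<tau> i)) \<in> space (SPow M n)"
  using assms(2) injs_less[OF assms(1)] by (auto simp: space_PiM PiE_def Pi_def)

lemma measurable_restrict_compose:
  assumes "\<tau> \<in> injs n N"
  shows "(\<lambda>x. \<lambda>i\<in>{..<n}. x (\<tau> i)) \<in> SPow M N \<rightarrow>\<^sub>M SPow M n"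
  by (rule measurable_restrict) (use injs_less[OF assms] in auto)

lemma Uop_bfun:
  assumes "g \<in> bfun M n"
  shows "Uop n N g \<in> bfun M N"
proof -
  obtain B where gm: "g \<in> borel_measurable (SPow M n)" and B: "\<And>y. y \<in> space (SPow M n) \<Longrightarrow> \<bar>g y\<bar> \<le> B"
    using assms unfolding bfun_def by blast
  show ?thesis
  proof (rule bfunI[where B="\<bar>1 / falling N n\<bar> * (real (card (injs n N)) * B)"])
    show "Uop n N g \<in> borel_measurable (SPow M N)"
    proof -
      have "(\<lambda>x. g (\<lambda>i\<in>{..<n}. x (\<tau> i))) \<in> borel_measurable (SPow M N)" if "\<tau> \<in> injs n N" for \<tau>
        using measurable_compose[OF measurable_restrict_compose[OF that] gm] .
      then show ?thesis unfolding Uop_def by measurable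
    qed
    fix x assume x: "x \<in> space (SPow M N)"
    have "\<bar>\<Sum>\<tau>\<in>injs n N. g (\<lambda>i\<in>{..<n}. x (\<tau> i))\<bar> \<le> (\<Sum>\<tau>\<in>injs n N. \<bar>g (\<lambda>i\<in>{..<n}. x (\<tau> i))\<bar>)"
      by (rule sum_abs)
    also have "\<dots> \<le> (\<Sum>\<tau>\<in>injs n N. B)"
      using B restrict_compose_in_space[OF _ x] by (intro sum_mono) auto
    finally show "\<bar>Uop n N g x\<bar> \<le> \<bar>1 / falling N n\<bar> * (real (card (injs n N)) * B)"
      unfolding Uop_def abs_mult by (intro mult_left_mono) auto
  qed
qed

subsection \<open>Symmetric functions are controlled by their U-statistics\<close>

definition pad_with :: "'a \<Rightarrow> nat \<Rightarrow> nat \<Rightarrow> (nat \<Rightarrow> 'a) \<Rightarrow> nat \<Rightarrow> 'a" where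
  "pad_with z n N y = (\<lambda>i. if i < n then y i else if i < N then z else undefined)"

definition coord_count :: "'a \<Rightarrow> nat \<Rightarrow> (nat \<Rightarrow> 'a) \<Rightarrow> nat" where
  "coord_count z n y = card {i\<in>{..<n}. y i = z}"

lemma coord_count_le: "coord_count z n y \<le> n"
  unfolding coord_count_def by (rule order_trans[OF card_mono[of "{..<n}"]]) auto

lemma pad_with_in_space:
  "z \<in> space M \<Longrightarrow> y \<in> space (SPow M n) \<Longrightarrow> n \<le> N \<Longrightarrow> pad_with z n N y \<in> space (SPow M N)"
  by (auto simp: space_PiM pad_with_def PiE_def Pi_def extensional_def)

lemma multiset_eq_if_count_eq_except:
  fixes A B :: "'a multiset"
  assumes "size A = size B" "\<And>v. v \<noteq> z \<Longrightarrow> count A v = count B v"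
  shows "A = B"
proof -
  have size_split: "size C = size (filter_mset (\<lambda>v. v \<noteq> z) C) + count C z" for C :: "'a multiset"
    by (metis add.commute count_conv_size_mset multiset_partition size_union)
  have "filter_mset (\<lambda>v. v \<noteq> z) A = filter_mset (\<lambda>v. v \<noteq> z) B"
    by (rule multiset_eqI) (use assms(2) in auto)
  then have "count A z = count B z" using size_split[of A] size_split[of B] assms(1) by simp
  then show ?thesis by (intro multiset_eqI) (metis assms(2))
qed

lemma select_pad_with_permutes:
  assumes \<tau>: "\<tau> \<in> injs n N" and y: "y \<in> space (SPow M n)"
    and covers: "{i\<in>{..<n}. y i \<noteq> z} \<subseteq> \<tau> ` {..<n}"
  obtains p where "p permutes {..<n}" "(\<lambda>i\<in>{..<n}. pad_with z n N y (\<tau> i)) = y \<circ> p"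
proof -
  let ?x = "pad_with z n N y"
  let ?w = "\<lambda>i\<in>{..<n}. ?x (\<tau> i)"
  have "image_mset ?w (mset_set {..<n}) = image_mset y (mset_set {..<n})"
  proof (rule multiset_eq_if_count_eq_except[where z=z])
    fix v assume "v \<noteq> z"
    have "\<tau> ` {j\<in>{..<n}. ?x (\<tau> j) = v} = {i\<in>{..<n}. y i = v}"
    proof (intro equalityI subsetI)
      fix i assume "i \<in> \<tau> ` {j\<in>{..<n}. ?x (\<tau> j) = v}"
      then obtain j where "j < n" "i = \<tau> j" "?x i = v" by auto
      with \<open>v \<noteq> z\<close> injs_less[OF \<tau>] show "i \<in> {i\<in>{..<n}. y i = v}"
        by (auto simp: pad_with_def split: if_splits)
    next
      fix i assume i: "i \<in> {i\<in>{..<n}. y i = v}"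
      with \<open>v \<noteq> z\<close> covers obtain j where "j < n" "i = \<tau> j" by blast
      with i show "i \<in> \<tau> ` {j\<in>{..<n}. ?x (\<tau> j) = v}" by (auto simp: pad_with_def)
    qed
    have "count (image_mset ?w (mset_set {..<n})) v = card {j\<in>{..<n}. ?x (\<tau> j) = v}"
      unfolding count_image_mset_eq_card_vimage[OF finite_lessThan]
      by (intro arg_cong[where f=card]) auto
    also have "\<dots> = card (\<tau> ` {j\<in>{..<n}. ?x (\<tau> j) = v})"
      by (rule card_image[symmetric]) (rule inj_on_subset[OF injs_inj_on[OF \<tau>]], auto)
    also note \<open>\<tau> ` {j\<in>{..<n}. ?x (\<tau> j) = v} = {i\<in>{..<n}. y i = v}\<close>
    finally show "count (image_mset ?w (mset_set {..<n})) v = count (image_mset y (mset_set {..<n})) v"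
      unfolding count_image_mset_eq_card_vimage[OF finite_lessThan] .
  qed simp
  then obtain p where p: "p permutes {..<n}" and w: "\<forall>i\<in>{..<n}. ?w i = y (p i)"
    by (rule image_mset_eq_implies_permutes[OF finite_lessThan])
  have "?w = y \<circ> p"
  proof
    fix i show "?w i = (y \<circ> p) i"
      using w permutes_not_in[OF p, of i] y by (cases "i < n") (auto simp: space_PiM PiE_def extensional_def)
  qed
  with p show thesis by (rule that)
qed

lemma coord_count_less_select_pad_with:
  assumes \<tau>: "\<tau> \<in> injs n N" and not_covers: "\<not> {i\<in>{..<n}. y i \<noteq> z} \<subseteq> \<tau> ` {..<n}"
  shows "coord_count z n y < coord_count z n (\<lambda>i\<in>{..<n}. pad_with z n N y (\<tau> i))"
proof -
  define A where "A = {i\<in>{..<n}. y i \<noteq> z}"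
  define T where "T = \<tau> ` {..<n}"
  have "A \<subseteq> {..<n}" "finite A" by (auto simp: A_def)
  have "card T = n" unfolding T_def using card_image[OF injs_inj_on[OF \<tau>]] by simp
  have "coord_count z n (\<lambda>i\<in>{..<n}. pad_with z n N y (\<tau> i)) = card {j\<in>{..<n}. pad_with z n N y (\<tau> j) = z}"
    unfolding coord_count_def by (intro arg_cong[where f=card]) auto
  also have "\<dots> = card (\<tau> ` {j\<in>{..<n}. pad_with z n N y (\<tau> j) = z})"
    by (rule card_image[symmetric, OF inj_on_subset[OF injs_inj_on[OF \<tau>]]]) auto
  also have "\<tau> ` {j\<in>{..<n}. pad_with z n N y (\<tau> j) = z} = T - (T \<inter> A)"
    using injs_less[OF \<tau>] by (auto simp: T_def A_def pad_with_def)
  also have "card (T - (T \<inter> A)) = n - card (T \<inter> A)"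
    using \<open>card T = n\<close> \<open>finite A\<close> by (subst card_Diff_subset) auto
  finally have count_select: "coord_count z n (\<lambda>i\<in>{..<n}. pad_with z n N y (\<tau> i)) = n - card (T \<inter> A)" .
  have "coord_count z n y = card ({..<n} - A)"
    unfolding coord_count_def A_def by (intro arg_cong[where f=card]) auto
  also have "\<dots> = n - card A" using \<open>A \<subseteq> {..<n}\<close> \<open>finite A\<close> by (subst card_Diff_subset) auto
  finally have count_y: "coord_count z n y = n - card A" .
  have "card (T \<inter> A) < card A"
    using not_covers \<open>finite A\<close> by (intro psubset_card_mono) (auto simp: A_def T_def)
  moreover have "card A \<le> n" using card_mono[OF _ \<open>A \<subseteq> {..<n}\<close>] by simp
  ultimately show ?thesis using count_select count_y by linarith
qed

text \<open>Averaging \<open>h\<close> over the injections into the padded point gives the value \<open>h y\<close> for the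
  injections covering the coordinates of \<open>y\<close> different from \<open>z\<close> (at least one, the identity, does),
  and values at points with more coordinates equal to \<open>z\<close> for all others.\<close>

lemma symmetric_abs_le_step:
  fixes h :: "(nat \<Rightarrow> 'a) \<Rightarrow> real"
  assumes "n \<le> N" and z: "z \<in> space M" and y: "y \<in> space (SPow M n)"
    and sym: "\<And>y p. y \<in> space (SPow M n) \<Longrightarrow> p permutes {..<n} \<Longrightarrow> h (y \<circ> p) = h y"
    and U: "\<bar>Uop n N h (pad_with z n N y)\<bar> \<le> S"
    and "B \<ge> 0"
    and B: "\<And>y'. y' \<in> space (SPow M n) \<Longrightarrow> coord_count z n y < coord_count z n y' \<Longrightarrow> \<bar>h y'\<bar> \<le> B"
  shows "\<bar>h y\<bar> \<le> real (card (injs n N)) * (S + B)"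
proof -
  define w where "w \<tau> = (\<lambda>i\<in>{..<n}. pad_with z n N y (\<tau> i))" for \<tau>
  define F where "F = real (card (injs n N))"
  define I1 where "I1 = {\<tau>\<in>injs n N. {i\<in>{..<n}. y i \<noteq> z} \<subseteq> \<tau> ` {..<n}}"
  define I2 where "I2 = injs n N - I1"
  have "F > 0" using falling_pos[OF \<open>n \<le> N\<close>] by (simp add: F_def falling_eq_card_injs)
  have "finite I1" "finite I2" "I1 \<subseteq> injs n N"
    using finite_injs by (auto simp: I1_def I2_def)
  have h_I1: "h (w \<tau>) = h y" if "\<tau> \<in> I1" for \<tau>
  proof -
    have "\<tau> \<in> injs n N" "{i\<in>{..<n}. y i \<noteq> z} \<subseteq> \<tau> ` {..<n}" using that by (auto simp: I1_def)
    then obtain p where "p permutes {..<n}" "w \<tau> = y \<circ> p"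
      unfolding w_def by (rule select_pad_with_permutes[OF _ y]) blast
    then show ?thesis using sym[OF y] by simp
  qed
  have h_I2: "\<bar>h (w \<tau>)\<bar> \<le> B" if "\<tau> \<in> I2" for \<tau>
    using that coord_count_less_select_pad_with[of \<tau> n N y z]
      restrict_compose_in_space[OF _ pad_with_in_space[OF z y \<open>n \<le> N\<close>]]
    by (intro B) (auto simp: I1_def I2_def w_def)
  have "restrict id {..<n} \<in> I1"
    using \<open>n \<le> N\<close> by (auto intro!: injsI simp: I1_def inj_on_def)
  then have "1 \<le> card I1" using \<open>finite I1\<close> by (metis One_nat_def Suc_leI card_gt_0_iff empty_iff)
  have "card I2 \<le> card (injs n N)" by (intro card_mono finite_injs) (auto simp: I2_def)
  have "F * Uop n N h (pad_with z n N y) = (\<Sum>\<tau>\<in>injs n N. h (w \<tau>))"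
    using \<open>F > 0\<close> by (simp add: Uop_def w_def falling_eq_card_injs F_def)
  also have "\<dots> = (\<Sum>\<tau>\<in>I1. h (w \<tau>)) + (\<Sum>\<tau>\<in>I2. h (w \<tau>))"
    using \<open>finite I1\<close> \<open>finite I2\<close> \<open>I1 \<subseteq> injs n N\<close>
    by (simp add: I2_def sum.subset_diff[OF \<open>I1 \<subseteq> injs n N\<close> finite_injs])
  also have "(\<Sum>\<tau>\<in>I1. h (w \<tau>)) = card I1 * h y" using h_I1 by simp
  finally have decomposition: "card I1 * h y = F * Uop n N h (pad_with z n N y) - (\<Sum>\<tau>\<in>I2. h (w \<tau>))"
    by simp
  have "\<bar>h y\<bar> \<le> \<bar>card I1 * h y\<bar>"
    using \<open>1 \<le> card I1\<close> by (simp add: abs_mult mult_le_cancel_right1)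
  also have "\<dots> \<le> \<bar>F * Uop n N h (pad_with z n N y)\<bar> + \<bar>\<Sum>\<tau>\<in>I2. h (w \<tau>)\<bar>"
    unfolding decomposition by (rule abs_triangle_ineq4)
  also have "\<dots> \<le> F * \<bar>Uop n N h (pad_with z n N y)\<bar> + (\<Sum>\<tau>\<in>I2. \<bar>h (w \<tau>)\<bar>)"
    using \<open>F > 0\<close> by (intro add_mono sum_abs) (simp add: abs_mult)
  also have "\<dots> \<le> F * S + card I2 * B"
    using U h_I2 \<open>F > 0\<close> sum_mono[of I2 "\<lambda>\<tau>. \<bar>h (w \<tau>)\<bar>" "\<lambda>_. B"] by (intro add_mono) auto
  also have "\<dots> \<le> F * (S + B)"
    using \<open>card I2 \<le> card (injs n N)\<close> \<open>B \<ge> 0\<close> by (simp add: F_def distrib_left mult_right_mono)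
  finally show ?thesis unfolding F_def .
qed

lemma symmetric_abs_le_Uop:
  fixes h :: "(nat \<Rightarrow> 'a) \<Rightarrow> real"
  assumes "n \<le> N" and "space M \<noteq> {}"
    and sym: "\<And>y p. y \<in> space (SPow M n) \<Longrightarrow> p permutes {..<n} \<Longrightarrow> h (y \<circ> p) = h y"
    and U: "\<And>x. x \<in> space (SPow M N) \<Longrightarrow> \<bar>Uop n N h x\<bar> \<le> S"
    and y: "y \<in> space (SPow M n)"
  shows "\<bar>h y\<bar> \<le> (2 * real (card (injs n N)) + 1) ^ (n + 1) * S"
proof -
  obtain z where z: "z \<in> space M" using \<open>space M \<noteq> {}\<close> by blast
  define F where "F = real (card (injs n N))"
  define K where "K = 2 * F + 1"
  have "F \<ge> 0" "K \<ge> 1" by (simp_all add: F_def K_def)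
  have "S \<ge> 0" using U[OF pad_with_in_space[OF z y \<open>n \<le> N\<close>]] by linarith
  have "\<bar>h y\<bar> \<le> K ^ (n - coord_count z n y + 1) * S" using y
  proof (induction "n - coord_count z n y" arbitrary: y rule: less_induct)
    case less
    define d where "d = n - coord_count z n y"
    have "\<bar>h y'\<bar> \<le> K ^ d * S" if "y' \<in> space (SPow M n)" "coord_count z n y < coord_count z n y'" for y'
    proof -
      have "n - coord_count z n y' < d" using that(2) coord_count_le[of z n y'] by (simp add: d_def)
      then have "\<bar>h y'\<bar> \<le> K ^ (n - coord_count z n y' + 1) * S" using less.hyps that(1) d_def by blast
      also have "\<dots> \<le> K ^ d * S"
        using \<open>n - coord_count z n y' < d\<close> \<open>K \<ge> 1\<close> \<open>S \<ge> 0\<close> by (intro mult_right_mono power_increasing) auto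
      finally show ?thesis .
    qed
    then have "\<bar>h y\<bar> \<le> F * (S + K ^ d * S)"
      using symmetric_abs_le_step[OF \<open>n \<le> N\<close> z less.prems sym U[OF pad_with_in_space[OF z less.prems \<open>n \<le> N\<close>]]]
        \<open>K \<ge> 1\<close> \<open>S \<ge> 0\<close> by (simp add: F_def)
    also have "\<dots> \<le> F * (2 * (K ^ d * S))"
      using \<open>F \<ge> 0\<close> mult_left_mono[OF one_le_power[OF \<open>K \<ge> 1\<close>] \<open>S \<ge> 0\<close>, of d]
      by (intro mult_left_mono) (simp_all add: mult.commute)
    also have "\<dots> = (2 * F) * (K ^ d * S)" by simp
    also have "\<dots> \<le> K * (K ^ d * S)"
      using \<open>K \<ge> 1\<close> \<open>S \<ge> 0\<close> by (intro mult_right_mono) (simp_all add: K_def)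
    finally show ?case by (simp add: d_def)
  qed
  also have "\<dots> \<le> K ^ (n + 1) * S"
    using \<open>K \<ge> 1\<close> \<open>S \<ge> 0\<close> by (intro mult_right_mono power_increasing) auto
  finally show ?thesis by (simp add: K_def F_def)
qed

lemma injs_self_restrict_eq_permutes:
  assumes \<pi>: "\<pi> \<in> injs n n"
  obtains \<sigma> where "\<sigma> permutes {..<n}" "\<And>y. y \<in> space (SPow M n) \<Longrightarrow> (\<lambda>i\<in>{..<n}. y (\<pi> i)) = y \<circ> \<sigma>"
proof
  let ?\<sigma> = "\<lambda>i. if i < n then \<pi> i else i"
  have "bij_betw ?\<sigma> {..<n} {..<n}"
  proof (rule bij_betw_imageI)
    show "inj_on ?\<sigma> {..<n}" using injs_inj_on[OF \<pi>] by (auto simp: inj_on_def)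
    show "?\<sigma> ` {..<n} = {..<n}" using injs_image_self[OF \<pi>] by (auto simp: image_def)
  qed
  then show "?\<sigma> permutes {..<n}" by (rule bij_imp_permutes) auto
  show "(\<lambda>i\<in>{..<n}. y (\<pi> i)) = y \<circ> ?\<sigma>" if "y \<in> space (SPow M n)" for y
    using that by (auto simp: space_PiM PiE_def extensional_def)
qed

lemma compose_permutes_in_space:
  assumes "\<sigma> permutes {..<n}" "y \<in> space (SPow M n)"
  shows "y \<circ> \<sigma> \<in> space (SPow M n)"
  using assms permutes_in_image[OF assms(1)] permutes_not_in[OF assms(1)]
  by (auto simp: space_PiM PiE_def extensional_def Pi_def)

lemma compose_permutes_measurable:
  assumes \<sigma>: "\<sigma> permutes {..<n}"
  shows "(\<lambda>y. y \<circ> \<sigma>) \<in> SPow M n \<rightarrow>\<^sub>M SPow M n"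
proof -
  have "(\<lambda>y. \<lambda>i\<in>{..<n}. y (\<sigma> i)) \<in> SPow M n \<rightarrow>\<^sub>M SPow M n"
    by (rule measurable_restrict) (use permutes_in_image[OF \<sigma>] in auto)
  moreover have "y \<circ> \<sigma> = (\<lambda>i\<in>{..<n}. y (\<sigma> i))" if "y \<in> space (SPow M n)" for y
    using that permutes_not_in[OF \<sigma>] by (auto simp: space_PiM PiE_def extensional_def)
  ultimately show ?thesis by (simp cong: measurable_cong)
qed

lemma compose_permutes_bfun:
  assumes f: "f \<in> bfun M N" and \<sigma>: "\<sigma> permutes {..<N}"
  shows "(\<lambda>x. f (x \<circ> \<sigma>)) \<in> bfun M N"
proof -
  obtain B where fm: "f \<in> borel_measurable (SPow M N)" and B: "\<forall>x\<in>space (SPow M N). \<bar>f x\<bar> \<le> B"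
    using f unfolding bfun_def by blast
  show ?thesis
    using measurable_compose[OF compose_permutes_measurable[OF \<sigma>] fm] B compose_permutes_in_space[OF \<sigma>]
    by (intro bfunI[where B=B]) auto
qed

lemma supnorm_compose_permutes_le:
  assumes "space M \<noteq> {}" "f \<in> bfun M N" "\<sigma> permutes {..<N}"
  shows "supnorm M N (\<lambda>x. f (x \<circ> \<sigma>)) \<le> supnorm M N f"
proof (rule supnorm_least[OF assms(1)])
  show "\<bar>f (x \<circ> \<sigma>)\<bar> \<le> supnorm M N f" if "x \<in> space (SPow M N)" for x
    by (rule abs_le_supnorm[OF assms(2) compose_permutes_in_space[OF assms(3) that]])
qed

lemma integrable_bfun_compose:
  assumes "prob_space P" "X \<in> P \<rightarrow>\<^sub>M SPow M n" "g \<in> bfun M n"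
  shows "integrable P (\<lambda>\<omega>. g (X \<omega>))"
proof -
  interpret prob_space P by fact
  obtain B where gm: "g \<in> borel_measurable (SPow M n)" and B: "\<forall>y\<in>space (SPow M n). \<bar>g y\<bar> \<le> B"
    using assms(3) unfolding bfun_def by blast
  show ?thesis
    using measurable_compose[OF assms(2) gm] B measurable_space[OF assms(2)]
    by (intro integrable_const_bound[where B=B]) auto
qed

lemma integral_Uop_self_exchangeable:
  assumes P: "prob_space P" and X: "X \<in> P \<rightarrow>\<^sub>M SPow M n" and exch: "exchangeable M n P X"
    and g: "g \<in> bfun M n"
  shows "(\<integral>\<omega>. Uop n n g (X \<omega>) \<partial>P) = (\<integral>\<omega>. g (X \<omega>) \<partial>P)"
proof -
  have gm: "g \<in> borel_measurable (SPow M n)" using g by (simp add: bfun_def)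
  have permuted: "(\<integral>\<omega>. g (\<lambda>i\<in>{..<n}. X \<omega> (\<pi> i)) \<partial>P) = (\<integral>\<omega>. g (X \<omega>) \<partial>P)"
    if \<pi>: "\<pi> \<in> injs n n" for \<pi>
  proof -
    obtain \<sigma> where \<sigma>: "\<sigma> permutes {..<n}" and eq: "\<And>y. y \<in> space (SPow M n) \<Longrightarrow> (\<lambda>i\<in>{..<n}. y (\<pi> i)) = y \<circ> \<sigma>"
      by (rule injs_self_restrict_eq_permutes[OF \<pi>, where M=M]) blast
    have X\<sigma>: "(\<lambda>\<omega>. X \<omega> \<circ> \<sigma>) \<in> P \<rightarrow>\<^sub>M SPow M n"
      using measurable_compose[OF X compose_permutes_measurable[OF \<sigma>]] .
    have "(\<integral>\<omega>. g (\<lambda>i\<in>{..<n}. X \<omega> (\<pi> i)) \<partial>P) = (\<integral>\<omega>. g (X \<omega> \<circ> \<sigma>) \<partial>P)"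
      using eq measurable_space[OF X] by (intro Bochner_Integration.integral_cong) auto
    also have "\<dots> = integral\<^sup>L (distr P (SPow M n) (\<lambda>\<omega>. X \<omega> \<circ> \<sigma>)) g"
      by (rule integral_distr[symmetric, OF X\<sigma> gm])
    also have "distr P (SPow M n) (\<lambda>\<omega>. X \<omega> \<circ> \<sigma>) = distr P (SPow M n) X"
      using exch \<sigma> unfolding exchangeable_def by blast
    also have "integral\<^sup>L (distr P (SPow M n) X) g = (\<integral>\<omega>. g (X \<omega>) \<partial>P)"
      by (rule integral_distr[OF X gm])
    finally show ?thesis .
  qed
  have "(\<integral>\<omega>. Uop n n g (X \<omega>) \<partial>P) = (1 / falling n n) * (\<Sum>\<pi>\<in>injs n n. \<integral>\<omega>. g (\<lambda>i\<in>{..<n}. X \<omega> (\<pi> i)) \<partial>P)"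
    unfolding Uop_def
    using integrable_bfun_compose[OF P measurable_compose[OF X measurable_restrict_compose] g]
    by simp
  also have "\<dots> = (\<integral>\<omega>. g (X \<omega>) \<partial>P)"
    using permuted falling_pos[of n n] by (simp add: falling_eq_card_injs)
  finally show ?thesis .
qed

text \<open>Apply the previous bound to the symmetric function \<open>U\<^sup>n\<^sub>n g\<close>, which satisfies
  \<open>U\<^sup>N\<^sub>n (U\<^sup>n\<^sub>n g) = U\<^sup>N\<^sub>n g\<close> and, by exchangeability, \<open>\<bbbE> (U\<^sup>n\<^sub>n g)(X) = \<bbbE> g(X)\<close>.\<close>

lemma abs_integral_le_supnorm_Uop:
  assumes "n \<le> N" "space M \<noteq> {}" and P: "prob_space P" and X: "X \<in> P \<rightarrow>\<^sub>M SPow M n"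
    and exch: "exchangeable M n P X" and g: "g \<in> bfun M n"
  shows "\<bar>\<integral>\<omega>. g (X \<omega>) \<partial>P\<bar> \<le> (2 * real (card (injs n N)) + 1) ^ (n + 1) * supnorm M N (Uop n N g)"
    (is "_ \<le> ?C * ?S")
proof -
  interpret prob_space P by fact
  let ?h = "Uop n n g"
  have h_le: "\<bar>?h y\<bar> \<le> ?C * ?S" if "y \<in> space (SPow M n)" for y
  proof (rule symmetric_abs_le_Uop[OF assms(1,2) _ _ that])
    show "?h (y \<circ> p) = ?h y" if "p permutes {..<n}" for y p
      by (rule Uop_compose_permutes[OF that])
    show "\<bar>Uop n N ?h x\<bar> \<le> ?S" if "x \<in> space (SPow M N)" for x
      unfolding Uop_Uop_self by (rule abs_le_supnorm[OF Uop_bfun[OF g] that])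
  qed
  have "\<bar>\<integral>\<omega>. g (X \<omega>) \<partial>P\<bar> = \<bar>\<integral>\<omega>. ?h (X \<omega>) \<partial>P\<bar>"
    using integral_Uop_self_exchangeable[OF P X exch g] by simp
  also have "\<dots> \<le> (\<integral>\<omega>. \<bar>?h (X \<omega>)\<bar> \<partial>P)" by (rule integral_abs_bound)
  also have "\<dots> \<le> (\<integral>\<omega>. ?C * ?S \<partial>P)"
    using integrable_bfun_compose[OF P X Uop_bfun[OF g]] h_le measurable_space[OF X]
    by (intro integral_mono) auto
  also have "\<dots> = ?C * ?S" using prob_space by simp
  finally show ?thesis .
qed

subsection \<open>Existence of extending functionals\<close>

definition bfun_linear :: "'a measure \<Rightarrow> nat \<Rightarrow> (((nat \<Rightarrow> 'a) \<Rightarrow> real) \<Rightarrow> real) \<Rightarrow> bool" where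
  "bfun_linear M N L \<longleftrightarrow>
     (\<forall>f\<in>bfun M N. \<forall>g\<in>bfun M N. \<forall>a b. L (\<lambda>x. a * f x + b * g x) = a * L f + b * L g)"

lemma bfun_linearD:
  "bfun_linear M N L \<Longrightarrow> f \<in> bfun M N \<Longrightarrow> g \<in> bfun M N \<Longrightarrow> L (\<lambda>x. a * f x + b * g x) = a * L f + b * L g"
  unfolding bfun_linear_def by blast

lemma opnorm_le_ereal:
  "(\<And>f. f \<in> bfun M N \<Longrightarrow> supnorm M N f \<le> 1 \<Longrightarrow> \<bar>L f\<bar> \<le> c) \<Longrightarrow> opnorm M N L \<le> ereal c"
  unfolding opnorm_def by (rule SUP_least) auto

lemma primnorm_le_opnorm:
  assumes "\<And>g. g \<in> bfun M n \<Longrightarrow> L (Uop n N g) = (\<integral>\<omega>. g (X \<omega>) \<partial>P)"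
  shows "primnorm M n N P X \<le> opnorm M N L"
  unfolding primnorm_def
proof (rule SUP_least)
  fix g assume g: "g \<in> {g \<in> bfun M n. supnorm M N (Uop n N g) \<le> 1}"
  then have "ereal \<bar>L (Uop n N g)\<bar> \<le> opnorm M N L"
    unfolding opnorm_def by (intro SUP_upper) (auto simp: Uop_bfun)
  with g assms show "ereal \<bar>\<integral>\<omega>. g (X \<omega>) \<partial>P\<bar> \<le> opnorm M N L" by simp
qed

context
  fixes M :: "'a measure" and P :: "'b measure" and X :: "'b \<Rightarrow> nat \<Rightarrow> 'a" and n N :: nat
  assumes nN: "n \<le> N" and sM: "space M \<noteq> {}" and P: "prob_space P"
    and X: "X \<in> P \<rightarrow>\<^sub>M SPow M n" and exch: "exchangeable M n P X"
begin

lemma primnorm_finite: obtains c where "c \<ge> 0" "primnorm M n N P X = ereal c"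
proof -
  define C where "C = (2 * real (card (injs n N)) + 1) ^ (n + 1)"
  have "C \<ge> 0" by (simp add: C_def)
  have "primnorm M n N P X \<le> ereal C"
    unfolding primnorm_def
  proof (rule SUP_least)
    fix g assume g: "g \<in> {g \<in> bfun M n. supnorm M N (Uop n N g) \<le> 1}"
    have "\<bar>\<integral>\<omega>. g (X \<omega>) \<partial>P\<bar> \<le> C * supnorm M N (Uop n N g)"
      unfolding C_def using g by (intro abs_integral_le_supnorm_Uop[OF nN sM P X exch]) auto
    also have "\<dots> \<le> C" using g \<open>C \<ge> 0\<close> by (simp add: mult_left_le)
    finally show "ereal \<bar>\<integral>\<omega>. g (X \<omega>) \<partial>P\<bar> \<le> ereal C" by simp
  qed
  moreover have "0 \<le> primnorm M n N P X"
  proof -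
    have "supnorm M N (Uop n N (\<lambda>_ :: nat \<Rightarrow> 'a. 0)) = 0"
      unfolding Uop_const[OF nN] by (rule supnorm_zero[OF sM])
    then show ?thesis
      unfolding primnorm_def by (intro SUP_upper2[of "\<lambda>_. 0"]) auto
  qed
  ultimately show thesis using that by (cases "primnorm M n N P X") auto
qed

lemma abs_integral_le_primnorm:
  assumes c: "primnorm M n N P X = ereal c" and g: "g \<in> bfun M n"
  shows "\<bar>\<integral>\<omega>. g (X \<omega>) \<partial>P\<bar> \<le> c * supnorm M N (Uop n N g)"
proof -
  define s where "s = supnorm M N (Uop n N g)"
  have "s \<ge> 0" unfolding s_def by (rule supnorm_nonneg[OF sM Uop_bfun[OF g]])
  show ?thesis
  proof (cases "s = 0")
    case True
    then show ?thesis using abs_integral_le_supnorm_Uop[OF nN sM P X exch g] by (simp add: s_def)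
  next
    case False
    with \<open>s \<ge> 0\<close> have "s > 0" by simp
    define g' where "g' = (\<lambda>y. (1 / s) * g y)"
    have "g' \<in> bfun M n" unfolding g'_def by (rule bfun_scale[OF g])
    have "Uop n N g' = (\<lambda>x. (1 / s) * Uop n N g x)"
      using Uop_lincomb[of n N "1 / s" g 0 g] by (simp add: g'_def)
    then have "supnorm M N (Uop n N g') = 1"
      using supnorm_scale[OF sM Uop_bfun[OF g], of "1 / s"] \<open>s > 0\<close> by (simp add: s_def)
    then have "ereal \<bar>\<integral>\<omega>. g' (X \<omega>) \<partial>P\<bar> \<le> primnorm M n N P X"
      unfolding primnorm_def using \<open>g' \<in> bfun M n\<close> by (intro SUP_upper) auto
    then have "\<bar>\<integral>\<omega>. g (X \<omega>) \<partial>P\<bar> / s \<le> c"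
      using c \<open>s > 0\<close> by (simp add: g'_def abs_mult)
    then show ?thesis using \<open>s > 0\<close> by (simp add: s_def divide_le_eq mult.commute)
  qed
qed

lemma integral_eq_if_Uop_eq:
  assumes c: "primnorm M n N P X = ereal c" and g: "g \<in> bfun M n" "g' \<in> bfun M n"
    and eq: "Uop n N g = Uop n N g'"
  shows "(\<integral>\<omega>. g (X \<omega>) \<partial>P) = (\<integral>\<omega>. g' (X \<omega>) \<partial>P)"
proof -
  define d where "d = (\<lambda>y. 1 * g y + (- 1) * g' y)"
  have "d \<in> bfun M n" unfolding d_def by (rule bfun_lincomb[OF g])
  have "Uop n N d = (\<lambda>_. 0)"
    unfolding d_def Uop_lincomb eq by simp
  then have "\<bar>\<integral>\<omega>. d (X \<omega>) \<partial>P\<bar> \<le> 0"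
    using abs_integral_le_primnorm[OF c \<open>d \<in> bfun M n\<close>] supnorm_zero[OF sM] by simp
  then show ?thesis
    using integrable_bfun_compose[OF P X g(1)] integrable_bfun_compose[OF P X g(2)] by (simp add: d_def)
qed

text \<open>Hahn--Banach applied to the primitive extending functional, defined on \<open>U\<^sup>N\<^sub>n(b(S\<^sup>n))\<close>
  through an arbitrary preimage; the previous lemma makes the choice irrelevant.\<close>

lemma dominated_extension_exists:
  assumes c: "primnorm M n N P X = ereal c" "c \<ge> 0"
  obtains L where "bfun_linear M N L"
    and "\<And>g. g \<in> bfun M n \<Longrightarrow> L (Uop n N g) = (\<integral>\<omega>. g (X \<omega>) \<partial>P)"
    and "\<And>f. f \<in> bfun M N \<Longrightarrow> \<bar>L f\<bar> \<le> c * supnorm M N f"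
proof -
  define E where "E g = (\<integral>\<omega>. g (X \<omega>) \<partial>P)" for g :: "(nat \<Rightarrow> 'a) \<Rightarrow> real"
  define V where "V = Uop n N ` bfun M n"
  define \<phi> where "\<phi> v = E (SOME g. g \<in> bfun M n \<and> v = Uop n N g)" for v
  have E_lincomb: "E (\<lambda>y. a * g1 y + b * g2 y) = a * E g1 + b * E g2"
    if "g1 \<in> bfun M n" "g2 \<in> bfun M n" for a b g1 g2
    unfolding E_def using integrable_bfun_compose[OF P X that(1)] integrable_bfun_compose[OF P X that(2)] by simp
  have \<phi>_Uop: "\<phi> (Uop n N g) = E g" if g: "g \<in> bfun M n" for g
  proof -
    define g' where "g' = (SOME g'. g' \<in> bfun M n \<and> Uop n N g = Uop n N g')"
    have "g' \<in> bfun M n \<and> Uop n N g = Uop n N g'"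
      unfolding g'_def by (rule someI[of _ g]) (use g in simp)
    then have "E g' = E g" unfolding E_def using integral_eq_if_Uop_eq[OF c(1), of g' g] g by simp
    then show ?thesis unfolding \<phi>_def g'_def by simp
  qed
  obtain L where L_lincomb: "\<And>f g a b. f \<in> bfun M N \<Longrightarrow> g \<in> bfun M N \<Longrightarrow> L (\<lambda>x. a * f x + b * g x) = a * L f + b * L g"
    and L_V: "\<And>f. f \<in> V \<Longrightarrow> L f = \<phi> f" and L_le: "\<And>f. f \<in> bfun M N \<Longrightarrow> L f \<le> c * supnorm M N f"
  proof (rule hahn_banach_extension[of "bfun M N" "\<lambda>f. c * supnorm M N f" V "Uop n N (\<lambda>_. 0)" \<phi>])
    show "(\<lambda>x. a * f x + b * g x) \<in> bfun M N" if "f \<in> bfun M N" "g \<in> bfun M N" for f g a b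
      using that by (rule bfun_lincomb)
    show "c * supnorm M N (\<lambda>x. f x + g x) \<le> c * supnorm M N f + c * supnorm M N g"
      if "f \<in> bfun M N" "g \<in> bfun M N" for f g
      using supnorm_add_le[OF sM that] c(2) by (simp add: distrib_left[symmetric] mult_left_mono)
    show "c * supnorm M N (\<lambda>x. a * f x) = a * (c * supnorm M N f)" if "f \<in> bfun M N" "a \<ge> 0" for f a
      using supnorm_scale[OF sM that] by simp
    show "V \<subseteq> bfun M N" unfolding V_def using Uop_bfun by blast
    show "Uop n N (\<lambda>_. 0) \<in> V" unfolding V_def by simp
    have V_lincomb: "(\<lambda>x. a * f x + b * g x) \<in> V \<and> \<phi> (\<lambda>x. a * f x + b * g x) = a * \<phi> f + b * \<phi> g"
      if fg: "f \<in> V" "g \<in> V" for f g a b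
    proof -
      obtain g1 g2 where g: "g1 \<in> bfun M n" "g2 \<in> bfun M n" and "f = Uop n N g1" "g = Uop n N g2"
        using fg unfolding V_def by blast
      then have "(\<lambda>x. a * f x + b * g x) = Uop n N (\<lambda>y. a * g1 y + b * g2 y)" by (simp add: Uop_lincomb)
      then show ?thesis
        using \<phi>_Uop[OF bfun_lincomb[OF g]] \<phi>_Uop[OF g(1)] \<phi>_Uop[OF g(2)] E_lincomb[OF g]
          \<open>f = Uop n N g1\<close> \<open>g = Uop n N g2\<close> bfun_lincomb[OF g] by (auto simp: V_def)
    qed
    show "(\<lambda>x. a * f x + b * g x) \<in> V" "\<phi> (\<lambda>x. a * f x + b * g x) = a * \<phi> f + b * \<phi> g"
      if "f \<in> V" "g \<in> V" for f g a b using V_lincomb[OF that] by blast+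
    show "\<phi> f \<le> c * supnorm M N f" if "f \<in> V" for f
      using that \<phi>_Uop abs_integral_le_primnorm[OF c(1)] unfolding V_def E_def by fastforce
  qed blast
  show thesis
  proof (rule that)
    show "bfun_linear M N L" unfolding bfun_linear_def using L_lincomb by blast
    show "L (Uop n N g) = (\<integral>\<omega>. g (X \<omega>) \<partial>P)" if "g \<in> bfun M n" for g
      using L_V[of "Uop n N g"] \<phi>_Uop[OF that] that by (simp add: V_def E_def)
    show "\<bar>L f\<bar> \<le> c * supnorm M N f" if f: "f \<in> bfun M N" for f
    proof -
      have "L (\<lambda>x. (- 1) * f x + 0 * f x) \<le> c * supnorm M N (\<lambda>x. (- 1) * f x + 0 * f x)"
        by (rule L_le[OF bfun_lincomb[OF f f]])
      then have "- L f \<le> c * supnorm M N f"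
        using L_lincomb[OF f f, of "- 1" 0] by (simp add: supnorm_def)
      then show ?thesis using L_le[OF f] by linarith
    qed
  qed
qed

end

definition symmetrization :: "nat \<Rightarrow> (((nat \<Rightarrow> 'a) \<Rightarrow> real) \<Rightarrow> real) \<Rightarrow> ((nat \<Rightarrow> 'a) \<Rightarrow> real) \<Rightarrow> real" where
  "symmetrization N L f = (\<Sum>\<sigma> | \<sigma> permutes {..<N}. L (\<lambda>x. f (x \<circ> \<sigma>))) / fact N"

lemma card_permutes_lessThan: "card {\<sigma>. \<sigma> permutes {..<N}} = fact N"
  using card_permutations[of "{..<N}" N] by simp

lemma symmetrization_linear:
  assumes "bfun_linear M N L"
  shows "bfun_linear M N (symmetrization N L)"
  unfolding bfun_linear_def symmetrization_def
  using bfun_linearD[OF assms compose_permutes_bfun compose_permutes_bfun]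
  by (simp add: sum.distrib sum_distrib_left add_divide_distrib)

lemma symmetrization_compose_permutes:
  assumes \<pi>: "\<pi> permutes {..<N}"
  shows "symmetrization N L (\<lambda>x. f (x \<circ> \<pi>)) = symmetrization N L f"
proof -
  have inj: "inj_on (\<lambda>\<sigma>. \<sigma> \<circ> \<pi>) {\<sigma>. \<sigma> permutes {..<N}}"
  proof (rule inj_onI)
    fix \<sigma>1 \<sigma>2 :: "nat \<Rightarrow> nat" assume eq: "\<sigma>1 \<circ> \<pi> = \<sigma>2 \<circ> \<pi>"
    show "\<sigma>1 = \<sigma>2"
    proof
      fix i
      have "\<pi> (inv \<pi> i) = i" by (rule permutes_inverses(1)[OF \<pi>])
      then show "\<sigma>1 i = \<sigma>2 i" using fun_cong[OF eq, of "inv \<pi> i"] by simp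
    qed
  qed
  have "(\<lambda>\<sigma>. \<sigma> \<circ> \<pi>) ` {\<sigma>. \<sigma> permutes {..<N}} = {\<sigma>. \<sigma> permutes {..<N}}"
    by (rule endo_inj_surj[OF _ _ inj]) (auto intro: permutes_compose[OF \<pi>] finite_permutations)
  with inj show ?thesis
    unfolding symmetrization_def
    using sum.reindex[of "\<lambda>\<sigma>. \<sigma> \<circ> \<pi>" "{\<sigma>. \<sigma> permutes {..<N}}" "\<lambda>\<sigma>. L (\<lambda>x. f (x \<circ> \<sigma>))"]
    by (simp add: o_assoc)
qed

lemma symmetrization_symmetric:
  "(\<And>\<sigma> x. \<sigma> permutes {..<N} \<Longrightarrow> f (x \<circ> \<sigma>) = f x) \<Longrightarrow> symmetrization N L f = L f"
  by (simp add: symmetrization_def card_permutes_lessThan)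

lemma abs_symmetrization_le:
  assumes "space M \<noteq> {}" "c \<ge> 0" "\<And>f. f \<in> bfun M N \<Longrightarrow> \<bar>L f\<bar> \<le> c * supnorm M N f"
    and f: "f \<in> bfun M N"
  shows "\<bar>symmetrization N L f\<bar> \<le> c * supnorm M N f"
proof -
  have "\<bar>\<Sum>\<sigma> | \<sigma> permutes {..<N}. L (\<lambda>x. f (x \<circ> \<sigma>))\<bar> \<le> (\<Sum>\<sigma> | \<sigma> permutes {..<N}. c * supnorm M N f)"
  proof (rule order_trans[OF sum_abs sum_mono])
    fix \<sigma> assume "\<sigma> \<in> {\<sigma>. \<sigma> permutes {..<N}}"
    then have \<sigma>: "\<sigma> permutes {..<N}" by simp
    show "\<bar>L (\<lambda>x. f (x \<circ> \<sigma>))\<bar> \<le> c * supnorm M N f"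
      using assms(3)[OF compose_permutes_bfun[OF f \<sigma>]] supnorm_compose_permutes_le[OF assms(1) f \<sigma>] assms(2)
      by (meson mult_left_mono order_trans)
  qed
  then show ?thesis
    by (simp add: symmetrization_def card_permutes_lessThan abs_divide pos_divide_le_eq mult.commute)
qed

theorem extending_exists:
  assumes "n \<le> N" "space M \<noteq> {}" "prob_space P" "X \<in> P \<rightarrow>\<^sub>M SPow M n" "exchangeable M n P X"
  shows "\<exists>L. extending M n N P X L"
proof -
  obtain c where c: "c \<ge> 0" "primnorm M n N P X = ereal c"
    using primnorm_finite[OF assms] by blast
  obtain L0 where L0: "bfun_linear M N L0"
    and L0_Uop: "\<And>g. g \<in> bfun M n \<Longrightarrow> L0 (Uop n N g) = (\<integral>\<omega>. g (X \<omega>) \<partial>P)"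
    and L0_le: "\<And>f. f \<in> bfun M N \<Longrightarrow> \<bar>L0 f\<bar> \<le> c * supnorm M N f"
    by (rule dominated_extension_exists[OF assms c(2,1)]) blast
  define L where "L = symmetrization N L0"
  have L_Uop: "L (Uop n N g) = (\<integral>\<omega>. g (X \<omega>) \<partial>P)" if "g \<in> bfun M n" for g
  proof -
    have "symmetrization N L0 (Uop n N g) = L0 (Uop n N g)"
      by (rule symmetrization_symmetric) (rule Uop_compose_permutes)
    then show ?thesis unfolding L_def using L0_Uop[OF that] by simp
  qed
  have "opnorm M N L \<le> ereal c"
  proof (rule opnorm_le_ereal)
    fix f assume "f \<in> bfun M N" "supnorm M N f \<le> 1"
    then show "\<bar>L f\<bar> \<le> c"
      unfolding L_def using abs_symmetrization_le[OF assms(2) c(1) L0_le] c(1)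
      by (meson mult_left_le order_trans)
  qed
  moreover have "primnorm M n N P X \<le> opnorm M N L" by (rule primnorm_le_opnorm[OF L_Uop])
  ultimately have "opnorm M N L = primnorm M n N P X" using c(2) by simp
  moreover have "bfun_linear M N L" unfolding L_def by (rule symmetrization_linear[OF L0])
  ultimately have "extending M n N P X L"
    using L_Uop symmetrization_compose_permutes
    unfolding extending_def bfun_linear_def[symmetric] L_def by blast
  then show ?thesis by blast
qed

lemma extending_bfun_linear: "extending M n N P X L \<Longrightarrow> bfun_linear M N L"
  unfolding extending_def bfun_linear_def by blast

lemma extending_const_one:
  assumes "extending M n N P X L" "n \<le> N" "prob_space P"
  shows "L (\<lambda>_. 1) = 1"
proof -
  have "L (\<lambda>_. 1) = L (Uop n N (\<lambda>_. 1))" by (simp add: Uop_const[OF assms(2)])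
  also have "\<dots> = (\<integral>\<omega>. 1 \<partial>P)" using assms(1) unfolding extending_def by (blast intro: bfun_const)
  also have "\<dots> = 1" using prob_space.prob_space[OF assms(3)] by simp
  finally show ?thesis .
qed

text \<open>A normalized functional of norm one is positive: for \<open>0 \<le> h \<le> B\<close> the function \<open>1 - h / B\<close> has
  sup norm at most one, so \<open>1 - L h / B \<le> 1\<close>.\<close>

lemma mono_if_opnorm_eq_one:
  assumes L: "bfun_linear M N L" and one: "L (\<lambda>_. 1) = 1" and norm: "opnorm M N L = 1"
    and "space M \<noteq> {}" and f: "f \<in> bfun M N" and g: "g \<in> bfun M N"
    and le: "\<And>x. x \<in> space (SPow M N) \<Longrightarrow> f x \<le> g x"
  shows "L f \<le> L g"
proof -
  define h where "h = (\<lambda>x. 1 * g x + (- 1) * f x)"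
  have h: "h \<in> bfun M N" unfolding h_def by (rule bfun_lincomb[OF g f])
  obtain B where B: "\<forall>x\<in>space (SPow M N). \<bar>h x\<bar> \<le> B" using h unfolding bfun_def by blast
  define B' where "B' = max B 1"
  have "B' > 0" by (simp add: B'_def)
  define u where "u = (\<lambda>x. 1 * (\<lambda>_. 1 :: real) x + (- 1 / B') * h x)"
  have u: "u \<in> bfun M N" unfolding u_def by (rule bfun_lincomb[OF bfun_const h])
  have "supnorm M N u \<le> 1"
  proof (rule supnorm_least[OF \<open>space M \<noteq> {}\<close>])
    fix x assume x: "x \<in> space (SPow M N)"
    have "0 \<le> h x" "h x \<le> B'" using le[OF x] B x by (auto simp: h_def B'_def)
    with \<open>B' > 0\<close> show "\<bar>u x\<bar> \<le> 1" by (simp add: u_def)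
  qed
  then have "\<bar>L u\<bar> \<le> 1"
    using abs_le_opnorm[of M N L 1 u] norm u by (simp add: one_ereal_def)
  moreover have "L u = 1 * L (\<lambda>_. 1) + (- 1 / B') * L h"
    unfolding u_def by (rule bfun_linearD[OF L bfun_const h])
  ultimately have "0 \<le> L h / B'" using one by (simp add: abs_le_iff)
  then have "0 \<le> L h" using \<open>B' > 0\<close> by (simp add: zero_le_divide_iff)
  then show ?thesis using bfun_linearD[OF L g f, of 1 "- 1"] by (simp add: h_def)
qed

lemma markov_if_mono:
  assumes L: "bfun_linear M N L" and one: "L (\<lambda>_. 1) = 1"
    and mono: "\<And>f g. f \<in> bfun M N \<Longrightarrow> g \<in> bfun M N \<Longrightarrow> (\<forall>x\<in>space (SPow M N). f x \<le> g x) \<Longrightarrow> L f \<le> L g"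
    and f: "f \<in> bfun M N" and le1: "\<forall>x\<in>space (SPow M N). f x \<le> 1" and "t < 1"
  shows "L (\<lambda>x. if f x \<le> t then 1 else 0) \<le> (1 - L f) / (1 - t)"
proof -
  define r where "r = (\<lambda>x. (1 / (1 - t)) * (\<lambda>_. 1 :: real) x + (- 1 / (1 - t)) * f x)"
  have "(\<lambda>x. if f x \<le> t then 1 else 0 :: real) \<in> bfun M N"
    using f by (intro bfunI[where B=1]) (auto simp: bfun_def)
  moreover have r: "r \<in> bfun M N" unfolding r_def by (rule bfun_lincomb[OF bfun_const f])
  moreover have "(if f x \<le> t then 1 else 0) \<le> r x" if "x \<in> space (SPow M N)" for x
    using \<open>t < 1\<close> le1 that by (simp add: r_def diff_divide_distrib[symmetric] le_divide_eq)
  ultimately have "L (\<lambda>x. if f x \<le> t then 1 else 0) \<le> L r" by (intro mono) auto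
  also have "L r = (1 / (1 - t)) * L (\<lambda>_. 1) + (- 1 / (1 - t)) * L f"
    unfolding r_def by (rule bfun_linearD[OF L bfun_const f])
  also have "\<dots> = (1 - L f) / (1 - t)"
    using one by (simp add: diff_divide_distrib)
  finally show ?thesis .
qed

theorem lemma9:
  fixes M :: "'a measure" and P :: "'b measure" and X :: "'b \<Rightarrow> nat \<Rightarrow> 'a"
    and n N :: nat
  assumes "n \<le> N"
    and "space M \<noteq> {}"
    and "prob_space P"
    and "X \<in> measurable P (SPow M n)"
    and "exchangeable M n P X"
  shows "((\<exists>L. extending M n N P X L) \<and>
          (\<forall>L. extending M n N P X L \<longrightarrow> L (\<lambda>_. 1) = 1)) \<and>
         (\<forall>L. extending M n N P X L \<and> opnorm M N L = 1 \<longrightarrow>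
           (\<forall>f\<in>bfun M N. \<forall>g\<in>bfun M N.
              (\<forall>x\<in>space (SPow M N). f x \<le> g x) \<longrightarrow> L f \<le> L g)) \<and>
         (\<forall>L. extending M n N P X L \<and> opnorm M N L = 1 \<longrightarrow>
           (\<forall>f\<in>bfun M N. (\<forall>x\<in>space (SPow M N). f x \<le> 1) \<longrightarrow>
              (\<forall>t::real. t < 1 \<longrightarrow>
                 L (\<lambda>x. if f x \<le> t then 1 else 0) \<le> (1 - L f) / (1 - t))))"
proof (intro conjI allI impI ballI)
  show "\<exists>L. extending M n N P X L" by (rule extending_exists[OF assms])
  show one: "L (\<lambda>_. 1) = 1" if "extending M n N P X L" for L
    by (rule extending_const_one[OF that assms(1,3)])
  fix L assume "extending M n N P X L \<and> opnorm M N L = 1"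
  then have L: "bfun_linear M N L" "L (\<lambda>_. 1) = 1" "opnorm M N L = 1"
    using extending_bfun_linear one by blast+
  show mono: "L f \<le> L g"
    if "f \<in> bfun M N" "g \<in> bfun M N" "\<forall>x\<in>space (SPow M N). f x \<le> g x" for f g
    using mono_if_opnorm_eq_one[OF L assms(2) that(1,2)] that(3) by blast
  show "L (\<lambda>x. if f x \<le> t then 1 else 0) \<le> (1 - L f) / (1 - t)"
    if "f \<in> bfun M N" "\<forall>x\<in>space (SPow M N). f x \<le> 1" "t < 1" for f t
    by (rule markov_if_mono[OF L(1,2) mono that])
qed

end
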